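(* For all integers $n\ge k\ge0$ and all complex $r$: (i) $S_{n,k}(0,0;r)=\binom nk r^{n-k}$; (ii) $S_{n,k}(1,1;r)=\binom nk r^{\underline{n-k}}$; (iii) $S_{n,k}(-1,1;r)=\binom nk (n+r-1)^{\underline{n-k}}$; (iv) $S_{n,k}(1,2;r)=\binom nk\,k!\,2^{-(n-k)}\sum_{j=0}^{n-k}\frac{(-r)^{\overline j}(-n+k)^{\overline j}}{j!\,\Gamma(2k-n+1+j)}2^j$, where $1/\Gamma$ vanishes at nonpositive integers (i.e. $\binom nk\frac{k!}{(2k-n)!}2^{-(n-k)}{}_2F_1(-r,-n+k;-n+2k+1\mid2)$ suitably regularized); (v) $S_{n,k}(-2,-1;r)=\binom nk\frac{(2n-k)!}{n!}2^{-(n-k)}\sum_{j=0}^{n-k}\frac{(r-1)^{\overline j}(-n+k)^{\overline j}}{j!\,(-2n+k)^{\overline j}}2^j$, the sum being interpreted as $1$ when $n=k=0$.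
   Context: Hsu–Shiue Stirling numbers $S_{n,k}(a,b;r)$: defined by $S_{0,0}=1$, $S_{n,k}=0$ if $n<0$, $k<0$ or $k>n$, and $S_{n+1,k+1}=[-an+b(k+1)+r]S_{n,k+1}+S_{n,k}$ for $n\ge0$, $k\in\mathbb Z$. $x^{\underline m}=x(x-1)\cdots(x-m+1)$, $x^{\overline m}=x(x+1)\cdots(x+m-1)$. *)

theory Defs
  imports "HOL-Analysis.Analysis"
begin

text \<open>Hsu--Shiue Stirling numbers S(n,k;a,b,r) for n, k >= 0 (values at negative
indices are 0, so the k = 0 instance of the recurrence has no S(n,-1) term).\<close>
fun hs_stirling :: "complex \<Rightarrow> complex \<Rightarrow> complex \<Rightarrow> nat \<Rightarrow> nat \<Rightarrow> complex" where
  "hs_stirling a b r 0 0 = 1"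
| "hs_stirling a b r 0 (Suc k) = 0"
| "hs_stirling a b r (Suc n) 0 = (- a * of_nat n + r) * hs_stirling a b r n 0"
| "hs_stirling a b r (Suc n) (Suc k) =
     (- a * of_nat n + b * of_nat (Suc k) + r) * hs_stirling a b r n (Suc k)
     + hs_stirling a b r n k"

definition falling_fact :: "complex \<Rightarrow> nat \<Rightarrow> complex" where
  "falling_fact x m = (\<Prod>i<m. x - of_nat i)"

end

theory Submission
  imports Defs
begin

text \<open>The recurrence determines \<open>S\<^sub>n\<^sub>,\<^sub>k\<close> uniquely, so it suffices to check that
each closed form satisfies it. For (i)--(iii) the closed form is \<open>binom n k \<cdot> g(n, n - k)\<close>
and the recurrence reduces to a two-term identity for \<open>g\<close>. For (iv) and (v) we first write
\<open>S\<^sub>n\<^sub>,\<^sub>k\<close> as a finite sum \<open>\<Sum>\<^sub>i T(n, k, i)\<close> and verify the recurrence by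
creative telescoping: \<open>T(n+1, k+1, i) - c \<cdot> T(n, k+1, i) - T(n, k, i) = U(i) - U(i+1)\<close>
for an explicit certificate \<open>U\<close>. Reversing the summation order \<open>i \<mapsto> n - k - i\<close> turns
these sums into the stated hypergeometric ones.\<close>

text \<open>\<open>rfact x = 1 / \<Gamma>(x + 1)\<close>, which vanishes at negative integers; products of \<open>rfact\<close>
factors therefore cut sums off at the natural boundaries of their index ranges.\<close>

definition rfact :: "int \<Rightarrow> complex" where
  "rfact x = (if x < 0 then 0 else inverse (fact (nat x)))"

lemma rfact_neg [simp]: "x < 0 \<Longrightarrow> rfact x = 0"
  by (simp add: rfact_def)

lemma rfact_of_nat: "rfact (int n) = inverse (fact n)"
  by (simp add: rfact_def)

lemma rfact_pred: "rfact (x - 1) = of_int x * rfact x"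
proof (cases "x \<le> 0")
  case True
  then show ?thesis by (cases "x = 0") auto
next
  case False
  then obtain m where "x = int (Suc m)" by (metis gr0_implies_Suc not_le zero_less_imp_eq_int)
  moreover have "x - 1 = int m" using \<open>x = int (Suc m)\<close> by simp
  ultimately show ?thesis
    by (simp only: rfact_of_nat of_int_of_nat_eq fact_Suc) (simp del: of_nat_Suc)
qed

lemma rGamma_of_int_Suc: "rGamma (of_int (x + 1)) = rfact x"
  using rGamma_of_int[of "x + 1", where 'a = complex] by (simp add: rfact_def)

lemma falling_fact_0 [simp]: "falling_fact x 0 = 1"
  by (simp add: falling_fact_def)

lemma falling_fact_Suc: "falling_fact x (Suc j) = falling_fact x j * (x - of_nat j)"
  by (simp add: falling_fact_def)

lemma falling_fact_Suc_left: "falling_fact x (Suc j) = x * falling_fact (x - 1) j"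
  unfolding falling_fact_def prod.lessThan_Suc_shift by (simp add: algebra_simps)

lemma pochhammer_minus_falling_fact: "pochhammer (- x) j = (-1) ^ j * falling_fact x j"
  by (induction j) (simp_all add: pochhammer_Suc falling_fact_Suc algebra_simps)

lemma falling_fact_of_nat: "j \<le> m \<Longrightarrow> falling_fact (of_nat m) j = fact m / fact (m - j)"
proof (induction j)
  case (Suc j)
  then have "m - j = Suc (m - Suc j)" and "of_nat m - of_nat j = (of_nat (m - j) :: complex)"
    by (simp_all add: of_nat_diff)
  with Suc show ?case by (simp add: falling_fact_Suc field_simps del: of_nat_Suc)
qed simp

lemma sum_lessThan_creative_telescoping:
  fixes T T' T'' U :: "nat \<Rightarrow> 'a::comm_ring"
  assumes "\<And>i. T' i = c * T'' i + T i + (U i - U (Suc i))" and "U 0 = 0" and "U N = 0"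
  shows "(\<Sum>i<N. T' i) = c * (\<Sum>i<N. T'' i) + (\<Sum>i<N. T i)"
proof -
  have "(\<Sum>i<N. U i - U (Suc i)) = 0"
    using sum_lessThan_telescope'[of U N] assms(2,3) by simp
  then show ?thesis by (simp add: assms(1) sum.distrib sum_distrib_left)
qed

text \<open>The column index is an integer so that the \<open>k = 0\<close> instance of the recurrence, which
involves \<open>S\<^sub>n\<^sub>,\<^sub>-\<^sub>1 = 0\<close>, is an instance of the general step.\<close>

lemma hs_stirling_eqI:
  fixes F :: "nat \<Rightarrow> int \<Rightarrow> complex"
  assumes "F 0 0 = 1" and "\<And>k. 0 < k \<Longrightarrow> F 0 k = 0" and "\<And>n. F n (-1) = 0"
    and rec: "\<And>n k. F (Suc n) (k + 1) = (- a * of_nat n + b * of_int (k + 1) + r) * F n (k + 1) + F n k"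
  shows "hs_stirling a b r n k = F n (int k)"
proof (induction n arbitrary: k)
  case 0
  then show ?case using assms(1,2) by (cases k) auto
next
  case (Suc n)
  then show ?case using rec[of n "int k - 1"] assms(3) by (cases k) (auto simp: algebra_simps)
qed

text \<open>Hypothesis \<open>rec\<close> is the recurrence for \<open>binom n k \<cdot> G n (n - k)\<close> at \<open>j = n - k\<close>,
multiplied by \<open>(k + 1)! (n - k)! / n!\<close>.\<close>

lemma hs_stirling_eq_binomial_mult:
  fixes G :: "nat \<Rightarrow> nat \<Rightarrow> complex"
  assumes "k \<le> n" and "G 0 0 = 1"
    and rec: "\<And>n j. of_nat (Suc n) * G (Suc n) j =
      (- a * of_nat n + b * (of_nat (Suc n) - of_nat j) + r) * of_nat j * G n (j - 1)
      + (of_nat (Suc n) - of_nat j) * G n j"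
  shows "hs_stirling a b r n k = of_nat (n choose k) * G n (n - k)"
proof -
  define F where "F n k = fact n * rfact k * rfact (int n - k) * G n (nat (int n - k))" for n k
  have "F (Suc n) (k + 1) = (- a * of_nat n + b * of_int (k + 1) + r) * F n (k + 1) + F n k" for n k
  proof (cases "int n - k < 0")
    case True
    then show ?thesis by (simp add: F_def)
  next
    case False
    then obtain j where j: "int n - k = int j" by (metis nonneg_int_cases not_less)
    then have k: "k = int n - int j" by simp
    define c where "c = - a * of_nat n + b * (of_nat (Suc n) - of_nat j) + r"
    have k1: "of_int (k + 1) = of_nat (Suc n) - (of_nat j :: complex)" by (simp add: k)
    have "F (Suc n) (k + 1) = fact n * rfact (k + 1) * rfact (int j) * (of_nat (Suc n) * G (Suc n) j)"
      by (simp add: F_def k)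
    also have "\<dots> = fact n * rfact (k + 1) * rfact (int j)
        * (c * of_nat j * G n (j - 1) + of_int (k + 1) * G n j)"
      by (simp only: rec c_def k1)
    also have "\<dots> = c * F n (k + 1) + F n k"
    proof -
      have j1: "int n - (k + 1) = int j - 1" and "nat (int j - 1) = j - 1" by (simp_all add: k)
      then have "F n (k + 1) = fact n * rfact (k + 1) * (of_nat j * rfact (int j)) * G n (j - 1)"
        unfolding F_def j1 rfact_pred by simp
      moreover have "F n k = fact n * (of_int (k + 1) * rfact (k + 1)) * rfact (int j) * G n j"
        using rfact_pred[of "k + 1"] by (simp add: F_def j)
      ultimately show ?thesis by (simp add: algebra_simps)
    qed
    finally show ?thesis unfolding k1 c_def .
  qed
  then have "hs_stirling a b r n k = F n (int k)"
    by (intro hs_stirling_eqI) (simp_all add: F_def rfact_def assms(2))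
  also have "\<dots> = fact n * inverse (fact k) * inverse (fact (n - k)) * G n (n - k)"
    using assms(1) by (simp add: F_def rfact_of_nat flip: of_nat_diff)
  finally show ?thesis using assms(1) by (simp add: binomial_fact field_simps)
qed

lemma hs_stirling_0_0: "k \<le> n \<Longrightarrow> hs_stirling 0 0 r n k = of_nat (n choose k) * r ^ (n - k)"
  by (rule hs_stirling_eq_binomial_mult) (auto split: nat_diff_split simp: power_eq_if algebra_simps)

lemma hs_stirling_1_1: "k \<le> n \<Longrightarrow> hs_stirling 1 1 r n k = of_nat (n choose k) * falling_fact r (n - k)"
proof (rule hs_stirling_eq_binomial_mult)
  show "of_nat (Suc n) * falling_fact r j =
      (- 1 * of_nat n + 1 * (of_nat (Suc n) - of_nat j) + r) * of_nat j * falling_fact r (j - 1)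
      + (of_nat (Suc n) - of_nat j) * falling_fact r j" for n j
    by (cases j) (simp_all add: falling_fact_Suc algebra_simps)
qed simp_all

lemma hs_stirling_neg1_1:
  "k \<le> n \<Longrightarrow> hs_stirling (-1) 1 r n k = of_nat (n choose k) * falling_fact (of_nat n + r - 1) (n - k)"
proof (rule hs_stirling_eq_binomial_mult)
  show "of_nat (Suc n) * falling_fact (of_nat (Suc n) + r - 1) j =
      (- (-1) * of_nat n + 1 * (of_nat (Suc n) - of_nat j) + r) * of_nat j * falling_fact (of_nat n + r - 1) (j - 1)
      + (of_nat (Suc n) - of_nat j) * falling_fact (of_nat n + r - 1) j" for n j
  proof (cases j)
    case (Suc i)
    have "falling_fact (of_nat (Suc n) + r - 1) (Suc i) = (of_nat n + r) * falling_fact (of_nat n + r - 1) i"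
      by (simp add: falling_fact_Suc_left algebra_simps)
    with Suc show ?thesis by (simp add: falling_fact_Suc algebra_simps)
  qed simp
qed simp_all

lemma rfact_mult_falling_fact:
  "rfact x * ((r - of_int x) * falling_fact r (nat x)) = rfact x * falling_fact r (nat (x + 1))"
proof (cases "x < 0")
  case False
  then have "nat (x + 1) = Suc (nat x)" by simp
  with False show ?thesis by (simp add: falling_fact_Suc mult_ac)
qed simp

lemma rfact_mult_pochhammer:
  "rfact x * ((r + of_int x) * pochhammer r (nat x)) = rfact x * pochhammer r (nat (x + 1))"
proof (cases "x < 0")
  case False
  then have "nat (x + 1) = Suc (nat x)" by simp
  with False show ?thesis by (simp add: pochhammer_Suc mult_ac)
qed simp

definition hs_stirling_1_2_term :: "complex \<Rightarrow> nat \<Rightarrow> int \<Rightarrow> nat \<Rightarrow> complex" where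
  "hs_stirling_1_2_term r n k i = fact n * rfact (k - int i) * rfact (int n - k - int i) * rfact (int i)
     / 2 ^ i * falling_fact r (nat (int n - k - int i))"

definition hs_stirling_1_2_cert :: "complex \<Rightarrow> nat \<Rightarrow> int \<Rightarrow> nat \<Rightarrow> complex" where
  "hs_stirling_1_2_cert r n k i = fact n * rfact (k + 1 - int i) * rfact (int n - k - int i) * rfact (int i - 1)
     * 2 / 2 ^ i * falling_fact r (nat (int n - k - int i))"

lemma hs_stirling_1_2_term_rec:
  "hs_stirling_1_2_term r (Suc n) (k + 1) i
     = (r - of_nat n + 2 * of_int k + 2) * hs_stirling_1_2_term r n (k + 1) i + hs_stirling_1_2_term r n k i
       + (hs_stirling_1_2_cert r n k i - hs_stirling_1_2_cert r n k (Suc i))"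
proof -
  define x where "x = int n - k - 1 - int i"
  define X where "X = fact n * rfact (k + 1 - int i) * rfact (int i) / 2 ^ i"
  define f where "f = falling_fact r (nat (x + 1))"
  define P where "P = X * rfact x * f"
  \<comment> \<open>both \<open>T(n+1, k+1, i) - U(i) - T(n, k, i)\<close> and \<open>c \<cdot> T(n, k+1, i) - U(i+1)\<close> equal \<open>P\<close>\<close>
  have x1: "int n - k - int i = x + 1" "int (Suc n) - (k + 1) - int i = x + 1" "int n - (k + 1) - int i = x"
    by (simp_all add: x_def)
  have Suc_i: "int n - k - int (Suc i) = x" "k + 1 - int (Suc i) = k - int i" "int (Suc i) - 1 = int i"
    by (simp_all add: x_def)
  have r_i: "rfact (int i - 1) = of_nat i * rfact (int i)"
    using rfact_pred[of "int i"] by simp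
  have r_k: "rfact (k - int i) = of_int (k + 1 - int i) * rfact (k + 1 - int i)"
    using rfact_pred[of "k + 1 - int i"] by simp
  have r_x: "rfact x = of_int (x + 1) * rfact (x + 1)"
    using rfact_pred[of "x + 1"] by simp
  have "hs_stirling_1_2_term r (Suc n) (k + 1) i = of_nat (Suc n) * (X * rfact (x + 1) * f)"
    unfolding hs_stirling_1_2_term_def X_def f_def x1 by (simp add: mult_ac del: of_nat_Suc)
  also have "of_nat (Suc n) = of_int (x + 1) + 2 * of_nat i + (of_int (k + 1 - int i) :: complex)"
    by (simp add: x_def)
  also have "\<dots> * (X * rfact (x + 1) * f) = P + hs_stirling_1_2_cert r n k i + hs_stirling_1_2_term r n k i"
    unfolding hs_stirling_1_2_term_def hs_stirling_1_2_cert_def P_def X_def f_def x1 r_i r_k r_x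
    by (simp add: field_simps)
  finally have split_Suc:
    "hs_stirling_1_2_term r (Suc n) (k + 1) i = P + hs_stirling_1_2_cert r n k i + hs_stirling_1_2_term r n k i" .
  have "(r - of_nat n + 2 * of_int k + 2) * hs_stirling_1_2_term r n (k + 1) i
      = X * (rfact x * ((r - of_int x) * falling_fact r (nat x)))
        + of_int (k + 1 - int i) * X * rfact x * falling_fact r (nat x)"
    unfolding hs_stirling_1_2_term_def X_def x1 by (simp add: x_def field_simps)
  also have "\<dots> = P + hs_stirling_1_2_cert r n k (Suc i)"
    unfolding rfact_mult_falling_fact hs_stirling_1_2_cert_def P_def X_def f_def Suc_i r_k
    by (simp add: field_simps)
  finally show ?thesis using split_Suc by (simp add: algebra_simps)
qed

lemma hs_stirling_1_2_term_eq_0: "n < i \<Longrightarrow> hs_stirling_1_2_term r n k i = 0"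
  by (cases "k - int i < 0") (auto simp: hs_stirling_1_2_term_def)

lemma sum_hs_stirling_1_2_term_rec:
  "(\<Sum>i\<le>Suc n. hs_stirling_1_2_term r (Suc n) (k + 1) i)
     = (r - of_nat n + 2 * of_int k + 2) * (\<Sum>i\<le>n. hs_stirling_1_2_term r n (k + 1) i)
       + (\<Sum>i\<le>n. hs_stirling_1_2_term r n k i)"
proof -
  have cert_Suc_Suc: "hs_stirling_1_2_cert r n k (Suc (Suc n)) = 0"
    by (cases "k + 1 - int (Suc (Suc n)) < 0") (auto simp: hs_stirling_1_2_cert_def)
  have trunc: "(\<Sum>i<Suc (Suc n). hs_stirling_1_2_term r n k' i) = (\<Sum>i\<le>n. hs_stirling_1_2_term r n k' i)" for k'
    by (simp add: hs_stirling_1_2_term_eq_0 lessThan_Suc_atMost)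
  have "(\<Sum>i<Suc (Suc n). hs_stirling_1_2_term r (Suc n) (k + 1) i)
     = (r - of_nat n + 2 * of_int k + 2) * (\<Sum>i<Suc (Suc n). hs_stirling_1_2_term r n (k + 1) i)
       + (\<Sum>i<Suc (Suc n). hs_stirling_1_2_term r n k i)"
    by (rule sum_lessThan_creative_telescoping[where U = "hs_stirling_1_2_cert r n k"],
        rule hs_stirling_1_2_term_rec, simp add: hs_stirling_1_2_cert_def, rule cert_Suc_Suc)
  then show ?thesis unfolding trunc by (simp only: lessThan_Suc_atMost)
qed

lemma hs_stirling_1_2_eq_sum: "hs_stirling 1 2 r n k = (\<Sum>i\<le>n. hs_stirling_1_2_term r n (int k) i)"
proof (rule hs_stirling_eqI)
  show "(\<Sum>i\<le>Suc n. hs_stirling_1_2_term r (Suc n) (k + 1) i)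
     = (- 1 * of_nat n + 2 * of_int (k + 1) + r) * (\<Sum>i\<le>n. hs_stirling_1_2_term r n (k + 1) i)
       + (\<Sum>i\<le>n. hs_stirling_1_2_term r n k i)" for n k
    unfolding sum_hs_stirling_1_2_term_rec by (simp add: algebra_simps)
qed (simp_all add: hs_stirling_1_2_term_def rfact_def)

lemma hs_stirling_1_2:
  assumes "k \<le> n"
  shows "hs_stirling 1 2 r n k = of_nat (n choose k) * fact k / 2 ^ (n - k) *
           (\<Sum>j=0..n-k. pochhammer (-r) j * pochhammer (- of_nat n + of_nat k) j
              / fact j * rGamma (of_int (2 * int k - int n + 1 + int j)) * 2 ^ j)"
proof -
  define m where "m = n - k"
  have "hs_stirling 1 2 r n k = (\<Sum>i=0..m. hs_stirling_1_2_term r n (int k) i)"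
    unfolding hs_stirling_1_2_eq_sum atLeast0AtMost
    by (rule sum.mono_neutral_right) (auto simp: hs_stirling_1_2_term_def m_def)
  also have "\<dots> = (\<Sum>j=0..m. hs_stirling_1_2_term r n (int k) (m - j))"
    using sum.atLeastAtMost_rev[of "hs_stirling_1_2_term r n (int k)" 0 m] by simp
  also have "\<dots> = (\<Sum>j=0..m. of_nat (n choose k) * fact k / 2 ^ m *
           (pochhammer (-r) j * pochhammer (- of_nat n + of_nat k) j
              / fact j * rGamma (of_int (2 * int k - int n + 1 + int j)) * 2 ^ j))"
  proof (rule sum.cong)
    fix j assume "j \<in> {0..m}"
    then have jm: "j \<le> m" by simp
    have e1: "int n - int k - int (m - j) = int j"
      and e2: "2 * int k - int n + 1 + int j = int k - int (m - j) + 1"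
      and e3: "- of_nat n + of_nat k = - (of_nat m :: complex)"
      using jm assms by (simp_all add: m_def of_nat_diff)
    have e4: "(of_nat (n choose k) :: complex) = fact n / (fact k * fact m)"
      using assms by (simp add: binomial_fact m_def)
    have e5: "(2::complex) ^ m = 2 ^ (m - j) * 2 ^ j"
      using jm by (simp flip: power_add)
    show "hs_stirling_1_2_term r n (int k) (m - j) = of_nat (n choose k) * fact k / 2 ^ m *
           (pochhammer (-r) j * pochhammer (- of_nat n + of_nat k) j
              / fact j * rGamma (of_int (2 * int k - int n + 1 + int j)) * 2 ^ j)"
      unfolding hs_stirling_1_2_term_def e1 e2 e3 e4 e5 rGamma_of_int_Suc
        pochhammer_minus_falling_fact falling_fact_of_nat[OF jm]
      by (simp add: rfact_of_nat field_simps flip: power_mult_distrib)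
  qed simp
  finally show ?thesis by (simp add: sum_distrib_left m_def)
qed

definition hs_stirling_neg2_neg1_term :: "complex \<Rightarrow> nat \<Rightarrow> int \<Rightarrow> nat \<Rightarrow> complex" where
  "hs_stirling_neg2_neg1_term r n k i = fact (n + i) * rfact k * rfact (int n - k - int i) * rfact (int i)
     / 2 ^ i * pochhammer (r - 1) (nat (int n - k - int i))"

definition hs_stirling_neg2_neg1_cert :: "complex \<Rightarrow> nat \<Rightarrow> int \<Rightarrow> nat \<Rightarrow> complex" where
  "hs_stirling_neg2_neg1_cert r n k i = fact (n + i) * rfact (k + 1) * rfact (int n - k - int i)
     * rfact (int i - 1) * 2 / 2 ^ i * pochhammer (r - 1) (nat (int n - k - int i))"

lemma hs_stirling_neg2_neg1_term_rec:
  "hs_stirling_neg2_neg1_term r (Suc n) (k + 1) i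
     = (2 * of_nat n - of_int k - 1 + r) * hs_stirling_neg2_neg1_term r n (k + 1) i
       + hs_stirling_neg2_neg1_term r n k i
       + (hs_stirling_neg2_neg1_cert r n k i - hs_stirling_neg2_neg1_cert r n k (Suc i))"
proof -
  define x where "x = int n - k - 1 - int i"
  define X where "X = fact (n + i) * rfact (k + 1) * rfact (int i) / 2 ^ i"
  define g where "g = pochhammer (r - 1) (nat (x + 1))"
  define P where "P = X * rfact x * g"
  have x1: "int n - k - int i = x + 1" "int (Suc n) - (k + 1) - int i = x + 1" "int n - (k + 1) - int i = x"
    by (simp_all add: x_def)
  have Suc_i: "int n - k - int (Suc i) = x" "int (Suc i) - 1 = int i"
    by (simp_all add: x_def)
  have r_i: "rfact (int i - 1) = of_nat i * rfact (int i)"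
    using rfact_pred[of "int i"] by simp
  have r_k: "rfact k = of_int (k + 1) * rfact (k + 1)"
    using rfact_pred[of "k + 1"] by simp
  have r_x: "rfact x = of_int (x + 1) * rfact (x + 1)"
    using rfact_pred[of "x + 1"] by simp
  have "hs_stirling_neg2_neg1_term r (Suc n) (k + 1) i = of_nat (Suc (n + i)) * (X * rfact (x + 1) * g)"
    unfolding hs_stirling_neg2_neg1_term_def X_def g_def x1 by (simp add: mult_ac del: of_nat_Suc)
  also have "of_nat (Suc (n + i)) = of_int (x + 1) + 2 * of_nat i + (of_int (k + 1) :: complex)"
    by (simp add: x_def)
  also have "\<dots> * (X * rfact (x + 1) * g)
      = P + hs_stirling_neg2_neg1_cert r n k i + hs_stirling_neg2_neg1_term r n k i"
    unfolding hs_stirling_neg2_neg1_term_def hs_stirling_neg2_neg1_cert_def P_def X_def g_def x1 r_i r_k r_x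
    by (simp add: field_simps)
  finally have split_Suc: "hs_stirling_neg2_neg1_term r (Suc n) (k + 1) i
      = P + hs_stirling_neg2_neg1_cert r n k i + hs_stirling_neg2_neg1_term r n k i" .
  have "(2 * of_nat n - of_int k - 1 + r) * hs_stirling_neg2_neg1_term r n (k + 1) i
      = X * (rfact x * ((r - 1 + of_int x) * pochhammer (r - 1) (nat x)))
        + of_nat (Suc (n + i)) * X * rfact x * pochhammer (r - 1) (nat x)"
    unfolding hs_stirling_neg2_neg1_term_def X_def x1 by (simp add: x_def field_simps)
  also have "\<dots> = P + hs_stirling_neg2_neg1_cert r n k (Suc i)"
    unfolding rfact_mult_pochhammer hs_stirling_neg2_neg1_cert_def P_def X_def g_def Suc_i
    by (simp add: field_simps)
  finally show ?thesis using split_Suc by (simp add: algebra_simps)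
qed

lemma hs_stirling_neg2_neg1_term_eq_0: "n < i \<Longrightarrow> hs_stirling_neg2_neg1_term r n k i = 0"
  by (cases "k < 0") (auto simp: hs_stirling_neg2_neg1_term_def)

lemma sum_hs_stirling_neg2_neg1_term_rec:
  "(\<Sum>i\<le>Suc n. hs_stirling_neg2_neg1_term r (Suc n) (k + 1) i)
     = (2 * of_nat n - of_int k - 1 + r) * (\<Sum>i\<le>n. hs_stirling_neg2_neg1_term r n (k + 1) i)
       + (\<Sum>i\<le>n. hs_stirling_neg2_neg1_term r n k i)"
proof -
  have cert_Suc_Suc: "hs_stirling_neg2_neg1_cert r n k (Suc (Suc n)) = 0"
    by (cases "k + 1 < 0") (auto simp: hs_stirling_neg2_neg1_cert_def)
  have trunc: "(\<Sum>i<Suc (Suc n). hs_stirling_neg2_neg1_term r n k' i)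
      = (\<Sum>i\<le>n. hs_stirling_neg2_neg1_term r n k' i)" for k'
    by (simp add: hs_stirling_neg2_neg1_term_eq_0 lessThan_Suc_atMost)
  have "(\<Sum>i<Suc (Suc n). hs_stirling_neg2_neg1_term r (Suc n) (k + 1) i)
     = (2 * of_nat n - of_int k - 1 + r) * (\<Sum>i<Suc (Suc n). hs_stirling_neg2_neg1_term r n (k + 1) i)
       + (\<Sum>i<Suc (Suc n). hs_stirling_neg2_neg1_term r n k i)"
    by (rule sum_lessThan_creative_telescoping[where U = "hs_stirling_neg2_neg1_cert r n k"],
        rule hs_stirling_neg2_neg1_term_rec, simp add: hs_stirling_neg2_neg1_cert_def, rule cert_Suc_Suc)
  then show ?thesis unfolding trunc by (simp only: lessThan_Suc_atMost)
qed

lemma hs_stirling_neg2_neg1_eq_sum: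
  "hs_stirling (-2) (-1) r n k = (\<Sum>i\<le>n. hs_stirling_neg2_neg1_term r n (int k) i)"
proof (rule hs_stirling_eqI)
  show "(\<Sum>i\<le>Suc n. hs_stirling_neg2_neg1_term r (Suc n) (k + 1) i)
     = (- (- 2) * of_nat n + - 1 * of_int (k + 1) + r) * (\<Sum>i\<le>n. hs_stirling_neg2_neg1_term r n (k + 1) i)
       + (\<Sum>i\<le>n. hs_stirling_neg2_neg1_term r n k i)" for n k
    unfolding sum_hs_stirling_neg2_neg1_term_rec by (simp add: algebra_simps)
qed (simp_all add: hs_stirling_neg2_neg1_term_def rfact_def)

lemma hs_stirling_neg2_neg1:
  assumes "k \<le> n"
  shows "hs_stirling (-2) (-1) r n k = of_nat (n choose k) * fact (2 * n - k) / fact n / 2 ^ (n - k) *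
           (\<Sum>j=0..n-k. pochhammer (r - 1) j * pochhammer (- of_nat n + of_nat k) j
              / (fact j * pochhammer (- 2 * of_nat n + of_nat k) j) * 2 ^ j)"
proof -
  define m where "m = n - k"
  have "hs_stirling (-2) (-1) r n k = (\<Sum>i=0..m. hs_stirling_neg2_neg1_term r n (int k) i)"
    unfolding hs_stirling_neg2_neg1_eq_sum atLeast0AtMost
    by (rule sum.mono_neutral_right) (auto simp: hs_stirling_neg2_neg1_term_def m_def)
  also have "\<dots> = (\<Sum>j=0..m. hs_stirling_neg2_neg1_term r n (int k) (m - j))"
    using sum.atLeastAtMost_rev[of "hs_stirling_neg2_neg1_term r n (int k)" 0 m] by simp
  also have "\<dots> = (\<Sum>j=0..m. of_nat (n choose k) * fact (2 * n - k) / fact n / 2 ^ m *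
           (pochhammer (r - 1) j * pochhammer (- of_nat n + of_nat k) j
              / (fact j * pochhammer (- 2 * of_nat n + of_nat k) j) * 2 ^ j))"
  proof (rule sum.cong)
    fix j assume "j \<in> {0..m}"
    then have jm: "j \<le> m" and jw: "j \<le> 2 * n - k" using assms by (simp_all add: m_def)
    have e1: "int n - int k - int (m - j) = int j" and e2: "n + (m - j) = 2 * n - k - j"
      and e3: "- of_nat n + of_nat k = - (of_nat m :: complex)"
      and e4: "- 2 * of_nat n + of_nat k = - (of_nat (2 * n - k) :: complex)"
      using jm assms by (simp_all add: m_def of_nat_diff)
    have e5: "(of_nat (n choose k) :: complex) = fact n / (fact k * fact m)"
      using assms by (simp add: binomial_fact m_def)
    have e6: "(2::complex) ^ m = 2 ^ (m - j) * 2 ^ j"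
      using jm by (simp flip: power_add)
    show "hs_stirling_neg2_neg1_term r n (int k) (m - j) = of_nat (n choose k) * fact (2 * n - k) / fact n / 2 ^ m *
           (pochhammer (r - 1) j * pochhammer (- of_nat n + of_nat k) j
              / (fact j * pochhammer (- 2 * of_nat n + of_nat k) j) * 2 ^ j)"
      unfolding hs_stirling_neg2_neg1_term_def e1 e2 e3 e4 e5 e6
        pochhammer_minus_falling_fact falling_fact_of_nat[OF jm] falling_fact_of_nat[OF jw]
      by (simp add: rfact_of_nat field_simps)
  qed simp
  finally show ?thesis by (simp add: sum_distrib_left m_def)
qed

theorem mainTheorem14:
  fixes n k :: nat and r :: complex
  assumes "k \<le> n"
  shows "(hs_stirling 0 0 r n k = of_nat (n choose k) * r ^ (n - k))
    \<and> (hs_stirling 1 1 r n k = of_nat (n choose k) * falling_fact r (n - k))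
    \<and> (hs_stirling (-1) 1 r n k = of_nat (n choose k) * falling_fact (of_nat n + r - 1) (n - k))
    \<and> (hs_stirling 1 2 r n k = of_nat (n choose k) * fact k / 2 ^ (n - k) *
           (\<Sum>j=0..n-k. pochhammer (-r) j * pochhammer (- of_nat n + of_nat k) j
              / fact j * rGamma (of_int (2 * int k - int n + 1 + int j)) * 2 ^ j))
    \<and> (hs_stirling (-2) (-1) r n k = of_nat (n choose k) * fact (2 * n - k) / fact n / 2 ^ (n - k) *
           (\<Sum>j=0..n-k. pochhammer (r - 1) j * pochhammer (- of_nat n + of_nat k) j
              / (fact j * pochhammer (- 2 * of_nat n + of_nat k) j) * 2 ^ j))"
  using hs_stirling_0_0 hs_stirling_1_1 hs_stirling_neg1_1 hs_stirling_1_2 hs_stirling_neg2_neg1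
  by (simp add: assms)

end
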